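(* Let $(S,d)$ be a metric space and let $P$ be a closed, proper, non-empty subset of $S$. Define $h_P(x)=\max\big(-1,\sup_{p\in P}[1-d(x,p)]\big)$ for $x\in S$. Then $h_P\in\operatorname{ext}(B^S_{\mathrm{FM}})$. If there exists $x\in S\setminus P$ with $d(x,P)<2$, then $h_P\in\operatorname{ext}_*(B^S_{\mathrm{FM}})$; otherwise $h_P$ is a trivial extreme point, i.e. $|h_P|=\mathbf{1}$.
   Context: $\mathrm{BL}(S)$ is the space of bounded real-valued Lipschitz functions on $S$, $|f|_L=\sup_{x\neq y}|f(x)-f(y)|/d(x,y)$, $\|f\|_{\mathrm{FM}}=\max(\|f\|_\infty,|f|_L)$, $B^S_{\mathrm{FM}}=\{f\in\mathrm{BL}(S):\|f\|_{\mathrm{FM}}\le1\}$, $\operatorname{ext}$ denotes extreme points, and $\operatorname{ext}_*(B^S_{\mathrm{FM}})=\operatorname{ext}(B^S_{\mathrm{FM}})\setminus\{f\in B^S_{\mathrm{FM}}:|f|=\mathbf{1}\}$. *)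

theory Defs
  imports "HOL-Analysis.Analysis"
begin

definition BL :: "('a::metric_space \<Rightarrow> real) set" where
  "BL = {f. bounded (range f) \<and> (\<exists>L. \<forall>x y. \<bar>f x - f y\<bar> \<le> L * dist x y)}"

definition lip_seminorm :: "('a::metric_space \<Rightarrow> real) \<Rightarrow> real" where
  "lip_seminorm f = (SUP xy \<in> {(x, y). x \<noteq> y}. \<bar>f (fst xy) - f (snd xy)\<bar> / dist (fst xy) (snd xy))"

definition sup_norm :: "('a \<Rightarrow> real) \<Rightarrow> real" where
  "sup_norm f = (SUP x. \<bar>f x\<bar>)"

definition FM_norm :: "('a::metric_space \<Rightarrow> real) \<Rightarrow> real" where
  "FM_norm f = max (sup_norm f) (lip_seminorm f)"

definition FM_ball :: "('a::metric_space \<Rightarrow> real) set" where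
  "FM_ball = {f \<in> BL. FM_norm f \<le> 1}"

definition ext :: "('a \<Rightarrow> real) set \<Rightarrow> ('a \<Rightarrow> real) set" where
  "ext K = {f \<in> K. \<forall>g\<in>K. \<forall>h\<in>K. \<forall>t::real. g \<noteq> h \<and> 0 < t \<and> t < 1
              \<longrightarrow> f \<noteq> (\<lambda>x. t * g x + (1 - t) * h x)}"

definition ext_star :: "('a::metric_space \<Rightarrow> real) set" where
  "ext_star = ext FM_ball - {f \<in> FM_ball. \<forall>x. \<bar>f x\<bar> = 1}"

definition hP :: "'a::metric_space set \<Rightarrow> 'a \<Rightarrow> real" where
  "hP P x = max (-1) (SUP p \<in> P. 1 - dist x p)"

end

theory Submission
  imports Defs
begin

text \<open>Since \<open>P\<close> is non-empty, \<open>h\<^sub>P = max (-1) (1 - d(\<cdot>, P))\<close>, which lies in the unit ball of the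
  Fortet-Mourier norm and equals \<open>1\<close> on \<open>P\<close>. Any \<open>g\<close> in the ball with \<open>g = 1\<close> on \<open>P\<close> satisfies
  \<open>g(x) \<ge> 1 - d(x, p)\<close> for all \<open>p \<in> P\<close> and \<open>g \<ge> -1\<close>, hence \<open>g \<ge> h\<^sub>P\<close>. If \<open>h\<^sub>P = t g + (1 - t) k\<close>,
  then \<open>g\<close> and \<open>k\<close> equal \<open>1\<close> on \<open>P\<close> because they are bounded by \<open>1\<close>, so both dominate \<open>h\<^sub>P\<close>, which forces
  \<open>g = k = h\<^sub>P\<close>. Finally \<open>|h\<^sub>P(x)| = 1\<close> exactly when \<open>x \<in> P\<close> or \<open>d(x, P) \<ge> 2\<close>.\<close>

lemma hP_eq_infdist:
  assumes "P \<noteq> {}"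
  shows "hP P x = max (-1) (1 - infdist x P)"
proof -
  have bdd: "bdd_above ((\<lambda>p. 1 - dist x p) ` P)"
    by (rule bdd_aboveI[where M=1]) auto
  have "(SUP p \<in> P. 1 - dist x p) = 1 - infdist x P"
  proof (rule antisym)
    show "(SUP p \<in> P. 1 - dist x p) \<le> 1 - infdist x P"
      using assms by (intro cSUP_least) (auto simp: infdist_le)
    have "1 - (SUP p \<in> P. 1 - dist x p) \<le> infdist x P"
      unfolding infdist_notempty[OF assms]
    proof (rule cINF_greatest[OF assms])
      fix p assume "p \<in> P"
      then have "1 - dist x p \<le> (SUP p \<in> P. 1 - dist x p)" by (rule cSUP_upper[OF _ bdd])
      then show "1 - (SUP p \<in> P. 1 - dist x p) \<le> dist x p" by simp
    qed
    then show "1 - infdist x P \<le> (SUP p \<in> P. 1 - dist x p)" by simp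
  qed
  then show ?thesis unfolding hP_def by simp
qed

lemma FM_ball_abs_le_one:
  assumes "g \<in> FM_ball"
  shows "\<bar>g x\<bar> \<le> 1"
proof -
  from assms have "bounded (range g)" and norm: "FM_norm g \<le> 1"
    unfolding FM_ball_def BL_def by auto
  then obtain B where "\<forall>y\<in>range g. norm y \<le> B" by (auto simp: bounded_iff)
  then have "bdd_above (range (\<lambda>x. \<bar>g x\<bar>))" by (intro bdd_aboveI[where M=B]) auto
  then have "\<bar>g x\<bar> \<le> sup_norm g" unfolding sup_norm_def by (intro cSUP_upper) auto
  also have "\<dots> \<le> 1" using norm unfolding FM_norm_def by simp
  finally show ?thesis .
qed

lemma FM_ball_lipschitz:
  assumes "g \<in> FM_ball"
  shows "\<bar>g x - g y\<bar> \<le> dist x y"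
proof (cases "x = y")
  case False
  from assms obtain L where L: "\<forall>x y. \<bar>g x - g y\<bar> \<le> L * dist x y" and norm: "FM_norm g \<le> 1"
    unfolding FM_ball_def BL_def by auto
  have "bdd_above ((\<lambda>xy. \<bar>g (fst xy) - g (snd xy)\<bar> / dist (fst xy) (snd xy)) ` {(x, y). x \<noteq> y})"
  proof (rule bdd_aboveI2[where M=L])
    fix xy :: "'a \<times> 'a" assume "xy \<in> {(x, y). x \<noteq> y}"
    then show "\<bar>g (fst xy) - g (snd xy)\<bar> / dist (fst xy) (snd xy) \<le> L"
      using L by (auto simp: divide_le_eq)
  qed
  then have "\<bar>g x - g y\<bar> / dist x y \<le> lip_seminorm g"
    unfolding lip_seminorm_def using False by (intro cSUP_upper2[where x="(x, y)"]) auto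
  also have "\<dots> \<le> 1" using norm unfolding FM_norm_def by simp
  finally show ?thesis using False by (simp add: divide_le_eq)
qed simp

text \<open>The hypothesis \<open>a \<noteq> b\<close> is needed because the Lipschitz seminorm is a supremum over pairs of
  distinct points, and the supremum of the empty set of reals is unspecified.\<close>
lemma FM_ballI:
  fixes f :: "'a::metric_space \<Rightarrow> real" and a b :: 'a
  assumes "a \<noteq> b"
    and abs_le: "\<And>x. \<bar>f x\<bar> \<le> 1"
    and lipschitz: "\<And>x y. \<bar>f x - f y\<bar> \<le> dist x y"
  shows "f \<in> FM_ball"
proof -
  have "bounded (range f)" using abs_le by (intro boundedI[where B=1]) auto
  then have "f \<in> BL"
    unfolding BL_def using lipschitz by (intro CollectI conjI exI[where x=1] allI) simp_all
  moreover have "sup_norm f \<le> 1"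
    unfolding sup_norm_def by (rule cSUP_least) (simp_all add: abs_le)
  moreover have "lip_seminorm f \<le> 1"
    unfolding lip_seminorm_def
  proof (rule cSUP_least)
    show "{(x, y). x \<noteq> y} \<noteq> ({} :: ('a \<times> 'a) set)" using \<open>a \<noteq> b\<close> by blast
    fix xy :: "'a \<times> 'a" assume "xy \<in> {(x, y). x \<noteq> y}"
    then have "dist (fst xy) (snd xy) > 0" by auto
    then show "\<bar>f (fst xy) - f (snd xy)\<bar> / dist (fst xy) (snd xy) \<le> 1"
      using lipschitz[of "fst xy" "snd xy"] by (simp add: divide_le_eq)
  qed
  ultimately show ?thesis unfolding FM_ball_def FM_norm_def by simp
qed

lemma convex_combination_eq_upper_bound:
  fixes a b c t :: real
  assumes "0 < t" "t < 1" "a \<le> c" "b \<le> c" "t * a + (1 - t) * b = c"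
  shows "a = c \<and> b = c"
proof -
  have "t * (c - a) + (1 - t) * (c - b) = 0" using assms(5) by (simp add: algebra_simps)
  moreover have "t * (c - a) \<ge> 0" "(1 - t) * (c - b) \<ge> 0" using assms(1-4) by simp_all
  ultimately have "t * (c - a) = 0" "(1 - t) * (c - b) = 0" by linarith+
  then show ?thesis using assms(1,2) by simp
qed

lemma least_peaking_on_in_ext:
  assumes "h \<in> K"
    and le_one: "\<And>g x. g \<in> K \<Longrightarrow> g x \<le> 1"
    and peak: "\<And>p. p \<in> P \<Longrightarrow> h p = 1"
    and least: "\<And>g x. g \<in> K \<Longrightarrow> (\<forall>p\<in>P. g p = 1) \<Longrightarrow> h x \<le> g x"
  shows "h \<in> ext K"
  unfolding ext_def
proof (safe intro!: \<open>h \<in> K\<close>)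
  fix g k :: "'a \<Rightarrow> real" and t :: real
  assume g: "g \<in> K" and k: "k \<in> K" and "g \<noteq> k" and t: "0 < t" "t < 1"
    and h_eq: "h = (\<lambda>x. t * g x + (1 - t) * k x)"
  have h_at: "h x = t * g x + (1 - t) * k x" for x
    using h_eq by simp
  have "g p = 1 \<and> k p = 1" if "p \<in> P" for p
    using convex_combination_eq_upper_bound[OF t le_one[OF g] le_one[OF k]] h_at[of p] peak[OF that]
    by simp
  then have "\<forall>p\<in>P. g p = 1" "\<forall>p\<in>P. k p = 1" by simp_all
  then have "- g x \<le> - h x" "- k x \<le> - h x" for x
    using least[OF g] least[OF k] by simp_all
  then have "- g x = - h x \<and> - k x = - h x" for x
    by (rule convex_combination_eq_upper_bound[OF t]) (simp add: h_at algebra_simps)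
  then show False using \<open>g \<noteq> k\<close> by auto
qed

lemma hP_in_FM_ball:
  assumes "P \<noteq> {}" "P \<noteq> UNIV"
  shows "hP P \<in> FM_ball"
proof -
  obtain p q where "p \<in> P" "q \<notin> P" using assms by auto
  then have "p \<noteq> q" by blast
  then show ?thesis
    unfolding hP_eq_infdist[OF assms(1)]
  proof (rule FM_ballI)
    show "\<bar>max (-1) (1 - infdist x P)\<bar> \<le> 1" for x
      using infdist_nonneg[of x P] by simp
    show "\<bar>max (-1) (1 - infdist x P) - max (-1) (1 - infdist y P)\<bar> \<le> dist x y" for x y
      using infdist_triangle_abs[of x P y] unfolding max_def abs_le_iff by auto
  qed
qed

lemma hP_le_if_FM_ball_eq_one_on:
  assumes "P \<noteq> {}" "g \<in> FM_ball" "\<forall>p\<in>P. g p = 1"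
  shows "hP P x \<le> g x"
proof -
  have "1 - g x \<le> infdist x P"
    unfolding infdist_notempty[OF assms(1)]
  proof (rule cINF_greatest[OF assms(1)])
    fix p assume "p \<in> P"
    then show "1 - g x \<le> dist x p" using FM_ball_lipschitz[OF assms(2), of x p] assms(3) by simp
  qed
  moreover have "-1 \<le> g x" using FM_ball_abs_le_one[OF assms(2), of x] by linarith
  ultimately show ?thesis unfolding hP_eq_infdist[OF assms(1)] by simp
qed

lemma abs_hP_eq_one_iff:
  assumes "closed P" "P \<noteq> {}"
  shows "\<bar>hP P x\<bar> = 1 \<longleftrightarrow> x \<in> P \<or> 2 \<le> infdist x P"
proof -
  have "0 \<le> infdist x P" by (rule infdist_nonneg)
  then have "\<bar>max (-1) (1 - infdist x P)\<bar> = 1 \<longleftrightarrow> infdist x P = 0 \<or> 2 \<le> infdist x P"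
    by (simp add: max_def abs_if)
  then show ?thesis
    using in_closed_iff_infdist_zero[OF assms, symmetric] hP_eq_infdist[OF assms(2)] by simp
qed

theorem lemmaC2:
  fixes P :: "'a::metric_space set"
  assumes "closed P" and "P \<noteq> UNIV" and "P \<noteq> {}"
  shows "hP P \<in> ext FM_ball
    \<and> ((\<exists>x. x \<notin> P \<and> infdist x P < 2) \<longrightarrow> hP P \<in> ext_star)
    \<and> (\<not> (\<exists>x. x \<notin> P \<and> infdist x P < 2) \<longrightarrow> (\<forall>x. \<bar>hP P x\<bar> = 1))"
proof -
  have ext: "hP P \<in> ext FM_ball"
  proof (rule least_peaking_on_in_ext[where P=P])
    show "hP P \<in> FM_ball" using assms(3,2) by (rule hP_in_FM_ball)
    show "g x \<le> 1" if "g \<in> FM_ball" for g and x :: 'a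
      using FM_ball_abs_le_one[OF that, of x] by simp
    show "hP P p = 1" if "p \<in> P" for p
      using that unfolding hP_eq_infdist[OF assms(3)] by simp
    show "hP P x \<le> g x" if "g \<in> FM_ball" "\<forall>p\<in>P. g p = 1" for g x
      using assms(3) that by (rule hP_le_if_FM_ball_eq_one_on)
  qed
  moreover have "hP P \<in> ext_star" if "x \<notin> P" "infdist x P < 2" for x
  proof -
    have "\<bar>hP P x\<bar> \<noteq> 1" using abs_hP_eq_one_iff[OF assms(1,3), of x] that by simp
    then show ?thesis using ext unfolding ext_star_def by blast
  qed
  moreover have "\<bar>hP P x\<bar> = 1" if "\<not> (\<exists>x. x \<notin> P \<and> infdist x P < 2)" for x
    using abs_hP_eq_one_iff[OF assms(1,3), of x] that by (simp add: not_less)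
  ultimately show ?thesis by blast
qed

end
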